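(* Let $C=C(m,n;k,l;c,d)$ be a $C$-shaped supergrid graph with $a=m-k>1$ and $c=d=1$, and let $s,t$ be two distinct vertices of $C$, labeled so that $s_x\leq t_x$, such that $(C,s,t)$ satisfies none of the conditions: (F1) $s$ or $t$ is a cut vertex of $C$, or $\{s,t\}$ is a vertex cut of $C$; (F3) there is a vertex $w\in V(C)$ with $\deg(w)=1$, $w\neq s$, $w\neq t$; (F7) $m=3$, $a=2$, and either ($c=1$ and $\{s,t\}=\{(1,1),(2,2)\}$ or $\{(1,2),(2,1)\}$) or ($d=1$ and $\{s,t\}=\{(1,n),(2,n-1)\}$ or $\{(1,n-1),(2,n)\}$); (F8) $n=3$, $k=c=d=1$, and one of: (1) $a\geq 2$, $s_x=t_x=m-1$, $|s_y-t_y|=2$; (2) $a=2$, $s_x=1$, $t_x=2$, $|s_y-t_y|=2$; (3) $a>2$, $s_x<m-1$, $t=(m-1,2)$. Then $C$ contains a Hamiltonian path from $s$ to $t$.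
   Context: The supergrid graph $S^\infty$ has vertex set $\mathbb{Z}^2$, two distinct vertices $u,v$ being adjacent iff $|u_x-v_x|\leq 1$ and $|u_y-v_y|\leq 1$; a supergrid graph is a finite vertex-induced subgraph of $S^\infty$. For integers $m\geq 2$, $n\geq 3$, $k,l,c\geq 1$ with $d=n-l-c\geq 1$ and $a=m-k\geq 1$, $C(m,n;k,l;c,d)$ is the supergrid graph induced by $\{(x,y):1\leq x\leq m,\ 1\leq y\leq n\}\setminus\{(x,y): a+1\leq x\leq m,\ c+1\leq y\leq c+l\}$. A cut vertex $v$: $C-v$ disconnected; a vertex cut $V_1$: $C-V_1$ disconnected. A Hamiltonian path from $s$ to $t$ is a simple path from $s$ to $t$ visiting every vertex exactly once. The paper assumes throughout that the given vertices are named so that $s_x\leq t_x$. *)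

theory Defs
  imports Main
begin

type_synonym vtx = "int \<times> int"

definition sg_adj :: "vtx \<Rightarrow> vtx \<Rightarrow> bool" where
  "sg_adj u v \<longleftrightarrow> u \<noteq> v \<and> \<bar>fst u - fst v\<bar> \<le> 1 \<and> \<bar>snd u - snd v\<bar> \<le> 1"

definition Cshape :: "int \<Rightarrow> int \<Rightarrow> int \<Rightarrow> int \<Rightarrow> int \<Rightarrow> vtx set" where
  "Cshape m n k l c =
     {(x, y). 1 \<le> x \<and> x \<le> m \<and> 1 \<le> y \<and> y \<le> n}
     - {(x, y). m - k + 1 \<le> x \<and> x \<le> m \<and> c + 1 \<le> y \<and> y \<le> c + l}"

definition sg_walk :: "vtx set \<Rightarrow> vtx list \<Rightarrow> bool" where
  "sg_walk V P \<longleftrightarrow> P \<noteq> [] \<and> set P \<subseteq> V \<and> (\<forall>i. Suc i < length P \<longrightarrow> sg_adj (P ! i) (P ! Suc i))"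

definition sg_connected :: "vtx set \<Rightarrow> bool" where
  "sg_connected V \<longleftrightarrow> (\<forall>u\<in>V. \<forall>v\<in>V. \<exists>P. sg_walk V P \<and> hd P = u \<and> last P = v)"

definition cut_vertex :: "vtx set \<Rightarrow> vtx \<Rightarrow> bool" where
  "cut_vertex V v \<longleftrightarrow> v \<in> V \<and> \<not> sg_connected (V - {v})"

definition vertex_cut :: "vtx set \<Rightarrow> vtx set \<Rightarrow> bool" where
  "vertex_cut V U \<longleftrightarrow> U \<subseteq> V \<and> \<not> sg_connected (V - U)"

definition sg_deg :: "vtx set \<Rightarrow> vtx \<Rightarrow> nat" where
  "sg_deg V w = card {u \<in> V. sg_adj w u}"

definition hamiltonian_path :: "vtx set \<Rightarrow> vtx \<Rightarrow> vtx \<Rightarrow> vtx list \<Rightarrow> bool" where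
  "hamiltonian_path V s t P \<longleftrightarrow>
     sg_walk V P \<and> distinct P \<and> set P = V \<and> hd P = s \<and> last P = t"

definition F1 :: "vtx set \<Rightarrow> vtx \<Rightarrow> vtx \<Rightarrow> bool" where
  "F1 V s t \<longleftrightarrow> cut_vertex V s \<or> cut_vertex V t \<or> vertex_cut V {s, t}"

definition F3 :: "vtx set \<Rightarrow> vtx \<Rightarrow> vtx \<Rightarrow> bool" where
  "F3 V s t \<longleftrightarrow> (\<exists>w\<in>V. sg_deg V w = 1 \<and> w \<noteq> s \<and> w \<noteq> t)"

definition F7 :: "int \<Rightarrow> int \<Rightarrow> int \<Rightarrow> int \<Rightarrow> int \<Rightarrow> vtx \<Rightarrow> vtx \<Rightarrow> bool" where
  "F7 m n a c d s t \<longleftrightarrow> m = 3 \<and> a = 2 \<and>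
     ((c = 1 \<and> ({s, t} = {(1,1), (2,2)} \<or> {s, t} = {(1,2), (2,1)})) \<or>
      (d = 1 \<and> ({s, t} = {(1,n), (2,n-1)} \<or> {s, t} = {(1,n-1), (2,n)})))"

definition F8 :: "int \<Rightarrow> int \<Rightarrow> int \<Rightarrow> int \<Rightarrow> int \<Rightarrow> int \<Rightarrow> vtx \<Rightarrow> vtx \<Rightarrow> bool" where
  "F8 m n a k c d s t \<longleftrightarrow> n = 3 \<and> k = 1 \<and> c = 1 \<and> d = 1 \<and>
     ((a \<ge> 2 \<and> fst s = m - 1 \<and> fst t = m - 1 \<and> \<bar>snd s - snd t\<bar> = 2) \<or>
      (a = 2 \<and> fst s = 1 \<and> fst t = 2 \<and> \<bar>snd s - snd t\<bar> = 2) \<or>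
      (a > 2 \<and> fst s < m - 1 \<and> t = (m - 1, 2)))"

end

theory Submission
  imports Defs
begin

(* For c = d = 1 the graph is the rectangle [1, a] x [1, n] with two arms of length k along its
   first and last row.  If k >= 2 the ends of the arms have degree 1, so by (F3) they are s and t,
   and the path runs along one arm, through the rectangle from corner (a, 1) to corner (a, n), and
   back along the other arm.  If k = 1 each arm is a single cell adjacent to two cells of column a.
   All paths are concatenations of a few building blocks: a rectangle has a Hamiltonian path from
   a corner to every admissible vertex, and so has a rectangle with one arm cell attached next to
   a corner.  Cutting the C-shape between two rows, or splitting off its left columns, settles
   most positions of s and t; explicit paths cover the configurations next to the arms, and the
   configurations left over are exactly those excluded by (F1), (F7) and (F8). *)

section \<open>Hamiltonian paths and their symmetries\<close>

definition has_ham_path :: "vtx set \<Rightarrow> vtx \<Rightarrow> vtx \<Rightarrow> bool" where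
  "has_ham_path V s t \<longleftrightarrow> (\<exists>P. hamiltonian_path V s t P)"

lemma sg_adj_iff [simp]:
  "sg_adj (x, y) (x', y') \<longleftrightarrow> (x \<noteq> x' \<or> y \<noteq> y') \<and> \<bar>x - x'\<bar> \<le> 1 \<and> \<bar>y - y'\<bar> \<le> 1"
  by (auto simp: sg_adj_def)

lemma sg_adj_sym: "sg_adj u v \<longleftrightarrow> sg_adj v u"
  by (auto simp: sg_adj_def abs_minus_commute)

lemma has_ham_path_singleton: "has_ham_path {v} v v"
  unfolding has_ham_path_def hamiltonian_path_def sg_walk_def by (rule exI[of _ "[v]"]) auto

lemma sg_walk_append:
  assumes "sg_walk A P" "sg_walk B Q" "sg_adj (last P) (hd Q)"
  shows "sg_walk (A \<union> B) (P @ Q)"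
  unfolding sg_walk_def
proof (intro conjI allI impI)
  show "P @ Q \<noteq> []" "set (P @ Q) \<subseteq> A \<union> B"
    using assms(1,2) by (auto simp: sg_walk_def)
next
  fix i assume i: "Suc i < length (P @ Q)"
  have P: "P \<noteq> []" "\<forall>i. Suc i < length P \<longrightarrow> sg_adj (P ! i) (P ! Suc i)"
    and Q: "Q \<noteq> []" "\<forall>i. Suc i < length Q \<longrightarrow> sg_adj (Q ! i) (Q ! Suc i)"
    using assms(1,2) by (auto simp: sg_walk_def)
  consider "Suc i < length P" | "Suc i = length P" | "length P \<le> i" by linarith
  then show "sg_adj ((P @ Q) ! i) ((P @ Q) ! Suc i)"
  proof cases
    case 2
    then have "(P @ Q) ! i = last P" "(P @ Q) ! Suc i = hd Q"
      using P(1) Q(1) by (auto simp: nth_append last_conv_nth hd_conv_nth simp flip: 2)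
    then show ?thesis using assms(3) by simp
  next
    case 3
    then have "Suc (i - length P) < length Q" using i by auto
    then show ?thesis using Q(2) 3 by (auto simp: nth_append Suc_diff_le)
  qed (use P in \<open>auto simp: nth_append\<close>)
qed

lemma has_ham_path_join:
  assumes "has_ham_path A s u" "has_ham_path B v t" "sg_adj u v" "A \<inter> B = {}" "A \<union> B = V"
  shows "has_ham_path V s t"
proof -
  obtain P Q where P: "hamiltonian_path A s u P" and Q: "hamiltonian_path B v t Q"
    using assms(1,2) by (auto simp: has_ham_path_def)
  have ne: "P \<noteq> []" "Q \<noteq> []" using P Q by (auto simp: hamiltonian_path_def sg_walk_def)
  have "hamiltonian_path V s t (P @ Q)"
    using P Q ne assms(3-5) sg_walk_append[of A P B Q]
    by (auto simp: hamiltonian_path_def)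
  then show ?thesis by (auto simp: has_ham_path_def)
qed

(* The rest of the path comes first, so that segments chain as
   rule has_ham_path_peel[OF _ segment], the remainder always being the first new subgoal. *)
lemma has_ham_path_peel:
  assumes "has_ham_path (V - A) v t" "has_ham_path A s u" "sg_adj u v" "A \<subseteq> V"
  shows "has_ham_path V s t"
  using assms by (intro has_ham_path_join[of A s u "V - A" v t]) auto

lemma sg_walk_rev: "sg_walk V P \<Longrightarrow> sg_walk V (rev P)"
  unfolding sg_walk_def
proof (intro conjI allI impI)
  fix i assume P: "P \<noteq> [] \<and> set P \<subseteq> V \<and> (\<forall>i. Suc i < length P \<longrightarrow> sg_adj (P ! i) (P ! Suc i))"
    and i: "Suc i < length (rev P)"
  then have "sg_adj (P ! (length P - Suc (Suc i))) (P ! Suc (length P - Suc (Suc i)))" by auto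
  moreover have "Suc (length P - Suc (Suc i)) = length P - Suc i" using i by auto
  ultimately show "sg_adj (rev P ! i) (rev P ! Suc i)"
    using i by (simp add: rev_nth sg_adj_sym)
qed auto

lemma has_ham_path_rev: "has_ham_path V s t \<Longrightarrow> has_ham_path V t s"
  unfolding has_ham_path_def hamiltonian_path_def
  by (metis sg_walk_rev distinct_rev set_rev hd_rev last_rev)

lemma has_ham_path_involution:
  assumes "has_ham_path V s t" "\<And>w. f (f w) = w" "\<And>u v. sg_adj (f u) (f v) \<longleftrightarrow> sg_adj u v"
    and "\<And>w. w \<in> V \<longleftrightarrow> f w \<in> W"
  shows "has_ham_path W (f s) (f t)"
proof -
  obtain P where P: "hamiltonian_path V s t P" using assms(1) by (auto simp: has_ham_path_def)
  have "inj f" by (metis assms(2) injI)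
  have "f ` V = W"
  proof
    show "W \<subseteq> f ` V"
    proof
      fix w assume "w \<in> W"
      then have "f w \<in> V" using assms(2,4) by metis
      then show "w \<in> f ` V" using assms(2) by (metis imageI)
    qed
  qed (use assms(4) in auto)
  then have "hamiltonian_path W (f s) (f t) (map f P)"
    using P assms(3) \<open>inj f\<close>
    by (auto simp: hamiltonian_path_def sg_walk_def hd_map last_map distinct_map
        inj_on_subset[of f UNIV])
  then show ?thesis by (auto simp: has_ham_path_def)
qed

lemma has_ham_path_mirror_x:
  assumes "has_ham_path V (c - i, j) (c - i', j')" "\<And>x y. (x, y) \<in> V \<longleftrightarrow> (c - x, y) \<in> W"
  shows "has_ham_path W (i, j) (i', j')"
proof -
  define f :: "vtx \<Rightarrow> vtx" where "f = (\<lambda>(x, y). (c - x, y))"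
  have "has_ham_path W (f (c - i, j)) (f (c - i', j'))"
    by (rule has_ham_path_involution[OF assms(1)])
      (use assms(2) in \<open>auto simp: f_def sg_adj_def abs_minus_commute split: prod.splits\<close>)
  then show ?thesis by (simp add: f_def)
qed

lemma has_ham_path_mirror_y:
  assumes "has_ham_path V (i, c - j) (i', c - j')" "\<And>x y. (x, y) \<in> V \<longleftrightarrow> (x, c - y) \<in> W"
  shows "has_ham_path W (i, j) (i', j')"
proof -
  define f :: "vtx \<Rightarrow> vtx" where "f = (\<lambda>(x, y). (x, c - y))"
  have "has_ham_path W (f (i, c - j)) (f (i', c - j'))"
    by (rule has_ham_path_involution[OF assms(1)])
      (use assms(2) in \<open>auto simp: f_def sg_adj_def abs_minus_commute split: prod.splits\<close>)
  then show ?thesis by (simp add: f_def)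
qed

lemma has_ham_path_transpose:
  assumes "has_ham_path V (j, i) (j', i')" "\<And>x y. (x, y) \<in> V \<longleftrightarrow> (y, x) \<in> W"
  shows "has_ham_path W (i, j) (i', j')"
proof -
  have "has_ham_path W (prod.swap (j, i)) (prod.swap (j', i'))"
    by (rule has_ham_path_involution[OF assms(1)])
      (use assms(2) in \<open>auto simp: sg_adj_def prod_eq_iff\<close>)
  then show ?thesis by simp
qed

section \<open>Rectangles\<close>

definition rect :: "int \<Rightarrow> int \<Rightarrow> int \<Rightarrow> int \<Rightarrow> vtx set" where
  "rect x0 x1 y0 y1 = {(x, y). x0 \<le> x \<and> x \<le> x1 \<and> y0 \<le> y \<and> y \<le> y1}"

lemma mem_rect [simp]:
  "(x, y) \<in> rect x0 x1 y0 y1 \<longleftrightarrow> x0 \<le> x \<and> x \<le> x1 \<and> y0 \<le> y \<and> y \<le> y1"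
  by (simp add: rect_def)

lemma has_ham_path_column: "y0 \<le> y1 \<Longrightarrow> has_ham_path (rect x x y0 y1) (x, y0) (x, y1)"
proof (induction "nat (y1 - y0)" arbitrary: y0)
  case 0
  then have "rect x x y0 y1 = {(x, y0)}" by auto
  then show ?case using 0 has_ham_path_singleton by simp
next
  case (Suc k)
  then have "has_ham_path (rect x x (y0 + 1) y1) (x, y0 + 1) (x, y1)" by simp
  then show ?case
    by (rule has_ham_path_join[OF has_ham_path_singleton]) (use Suc.hyps(2) in auto)
qed

lemma has_ham_path_row: "x0 \<le> x1 \<Longrightarrow> has_ham_path (rect x0 x1 y y) (x0, y) (x1, y)"
  by (rule has_ham_path_transpose[OF has_ham_path_column]) auto

lemma has_ham_path_column_down: "y0 \<le> y1 \<Longrightarrow> has_ham_path (rect x x y0 y1) (x, y1) (x, y0)"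
  by (rule has_ham_path_rev[OF has_ham_path_column])

lemma has_ham_path_row_left: "x0 \<le> x1 \<Longrightarrow> has_ham_path (rect x0 x1 y y) (x1, y) (x0, y)"
  by (rule has_ham_path_rev[OF has_ham_path_row])

lemma has_ham_path_rect_from_x0y0:
  assumes "t \<in> rect x0 x1 y0 y1" "t \<noteq> (x0, y0)"
    and "x0 = x1 \<Longrightarrow> t = (x0, y1)" and "y0 = y1 \<Longrightarrow> t = (x1, y0)"
  shows "has_ham_path (rect x0 x1 y0 y1) (x0, y0) t"
  using assms
proof (induction "nat (x1 - x0 + (y1 - y0))" arbitrary: x0 x1 y0 y1 t rule: less_induct)
  case less
  obtain i j where t: "t = (i, j)" by fastforce
  have t_in: "x0 \<le> i" "i \<le> x1" "y0 \<le> j" "j \<le> y1" using less.prems(1) t by auto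
  have IH: "has_ham_path (rect x0' x1' y0' y1') (x0', y0') (i', j')"
    if "x1' - x0' + (y1' - y0') < x1 - x0 + (y1 - y0)" "(i', j') \<in> rect x0' x1' y0' y1'"
      "(i', j') \<noteq> (x0', y0')" "x0' = x1' \<Longrightarrow> (i', j') = (x0', y1')"
      "y0' = y1' \<Longrightarrow> (i', j') = (x1', y0')"
    for x0' x1' y0' y1' i' j'
    using that by (intro less.hyps) auto
  show ?case
  proof (cases "x0 = x1 \<or> y0 = y1")
    case True
    then show ?thesis using less.prems has_ham_path_column has_ham_path_row by auto
  next
    case False
    then have wide: "x0 < x1" "y0 < y1" using t_in by auto
    \<comment> \<open>Sweep the bottom row or the left column first and continue from a corner of the rest,
      reflecting the rectangle so that the induction hypothesis applies.\<close>
    consider (row_first) "y0 < j" "(i, j) \<noteq> (x1, y0 + 1)" "y1 = y0 + 1 \<Longrightarrow> i = x0"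
      | (column_first) "x0 < i" "(i, j) \<noteq> (x0 + 1, y1)" "x1 = x0 + 1 \<Longrightarrow> j = y0"
      | (narrow) "x1 = x0 + 1" "(i, j) = (x1, y0 + 1)"
      | (flat) "y1 = y0 + 1" "(i, j) = (x0 + 1, y1)"
      using t t_in wide less.prems(2) by fastforce
    then show ?thesis
    proof cases
      case row_first
      have mirrored: "has_ham_path (rect x0 x1 (y0 + 1) y1) (x0, y0 + 1) (x0 + x1 - i, j)"
        by (rule IH) (use row_first t_in wide in auto)
      have upper: "has_ham_path (rect x0 x1 (y0 + 1) y1) (x1, y0 + 1) (i, j)"
        by (rule has_ham_path_mirror_x[where c = "x0 + x1" and V = "rect x0 x1 (y0 + 1) y1"])
          (use mirrored in auto)
      show ?thesis unfolding t
        by (rule has_ham_path_join[OF has_ham_path_row[of x0 x1 y0] upper]) (use wide in auto)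
    next
      case column_first
      have mirrored: "has_ham_path (rect (x0 + 1) x1 y0 y1) (x0 + 1, y0) (i, y0 + y1 - j)"
        by (rule IH) (use column_first t_in wide in auto)
      have right: "has_ham_path (rect (x0 + 1) x1 y0 y1) (x0 + 1, y1) (i, j)"
        by (rule has_ham_path_mirror_y[where c = "y0 + y1" and V = "rect (x0 + 1) x1 y0 y1"])
          (use mirrored in auto)
      show ?thesis unfolding t
        by (rule has_ham_path_join[OF has_ham_path_column[of y0 y1 x0] right]) (use wide in auto)
    next
      case narrow
      show ?thesis unfolding t narrow(2)
        by (rule has_ham_path_peel[OF _ has_ham_path_row[of x0 x1 y0]],
            rule has_ham_path_join[OF has_ham_path_column[of "y0 + 1" y1 x0]
              has_ham_path_column_down[of "y0 + 1" y1 x1]])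
          (use narrow(1) wide in auto)
    next
      case flat
      show ?thesis unfolding t flat(2)
        by (rule has_ham_path_peel[OF _ has_ham_path_column[of y0 y1 x0]],
            rule has_ham_path_join[OF has_ham_path_row[of "x0 + 1" x1 y0]
              has_ham_path_row_left[of "x0 + 1" x1 y1]])
          (use flat(1) wide in auto)
    qed
  qed
qed

lemma has_ham_path_rect_from_x1y0:
  assumes "t \<in> rect x0 x1 y0 y1" "t \<noteq> (x1, y0)"
    and "x0 = x1 \<Longrightarrow> t = (x1, y1)" and "y0 = y1 \<Longrightarrow> t = (x0, y0)"
  shows "has_ham_path (rect x0 x1 y0 y1) (x1, y0) t"
proof -
  obtain i j where t: "t = (i, j)" by fastforce
  have mirrored: "has_ham_path (rect x0 x1 y0 y1) (x0, y0) (x0 + x1 - i, j)"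
    by (rule has_ham_path_rect_from_x0y0) (use assms t in auto)
  show ?thesis unfolding t
    by (rule has_ham_path_mirror_x[where c = "x0 + x1" and V = "rect x0 x1 y0 y1"])
      (use mirrored in auto)
qed

lemma has_ham_path_rect_from_x0y1:
  assumes "t \<in> rect x0 x1 y0 y1" "t \<noteq> (x0, y1)"
    and "x0 = x1 \<Longrightarrow> t = (x0, y0)" and "y0 = y1 \<Longrightarrow> t = (x1, y1)"
  shows "has_ham_path (rect x0 x1 y0 y1) (x0, y1) t"
proof -
  obtain i j where t: "t = (i, j)" by fastforce
  have mirrored: "has_ham_path (rect x0 x1 y0 y1) (x0, y0) (i, y0 + y1 - j)"
    by (rule has_ham_path_rect_from_x0y0) (use assms t in auto)
  show ?thesis unfolding t
    by (rule has_ham_path_mirror_y[where c = "y0 + y1" and V = "rect x0 x1 y0 y1"])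
      (use mirrored in auto)
qed

lemma has_ham_path_rect_from_x1y1:
  assumes "t \<in> rect x0 x1 y0 y1" "t \<noteq> (x1, y1)"
    and "x0 = x1 \<Longrightarrow> t = (x1, y0)" and "y0 = y1 \<Longrightarrow> t = (x0, y1)"
  shows "has_ham_path (rect x0 x1 y0 y1) (x1, y1) t"
proof -
  obtain i j where t: "t = (i, j)" by fastforce
  have mirrored: "has_ham_path (rect x0 x1 y0 y1) (x1, y0) (i, y0 + y1 - j)"
    by (rule has_ham_path_rect_from_x1y0) (use assms t in auto)
  show ?thesis unfolding t
    by (rule has_ham_path_mirror_y[where c = "y0 + y1" and V = "rect x0 x1 y0 y1"])
      (use mirrored in auto)
qed

section \<open>Rectangles with one arm cell\<close>

(* Cutting a C-block between the rows h and h + 1 leaves tab_low 1 a 1 h and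
   tab_high 1 a (h + 1) n. *)
definition tab_low :: "int \<Rightarrow> int \<Rightarrow> int \<Rightarrow> int \<Rightarrow> vtx set" where
  "tab_low x0 x1 y0 y1 = rect x0 x1 y0 y1 \<union> {(x1 + 1, y0)}"

lemma has_ham_path_tab_low_column:
  assumes "y0 < y1"
  shows "has_ham_path (tab_low x x y0 y1) (x, y1) (x, y0)"
  by (rule has_ham_path_peel[OF _ has_ham_path_column_down[of "y0 + 1" y1 x]],
      rule has_ham_path_join[OF has_ham_path_singleton[of "(x + 1, y0)"]
        has_ham_path_singleton[of "(x, y0)"]])
    (use assms in \<open>auto simp: tab_low_def\<close>)

lemma has_ham_path_tab_low_top_corner_to_tab:
  assumes "x0 < x1" "y0 < y1" "s = (x0, y1) \<or> s = (x1, y1)"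
  shows "has_ham_path (tab_low x0 x1 y0 y1) s (x1 + 1, y0)"
proof -
  have "has_ham_path (rect x0 x1 y0 y1) s (x1, y0)"
    using assms by (auto intro: has_ham_path_rect_from_x0y1 has_ham_path_rect_from_x1y1)
  then show ?thesis
    by (rule has_ham_path_join[OF _ has_ham_path_singleton]) (auto simp: tab_low_def)
qed

lemma has_ham_path_tab_low_from_x0y1_thin:
  assumes "x0 < x1" "t \<in> tab_low x0 x1 y0 (y0 + 1)" "t \<noteq> (x0, y0 + 1)"
  shows "has_ham_path (tab_low x0 x1 y0 (y0 + 1)) (x0, y0 + 1) t"
proof (cases "t = (x1 + 1, y0)")
  case True
  then show ?thesis using assms(1) by (simp add: has_ham_path_tab_low_top_corner_to_tab)
next
  case False
  then obtain i j where t: "t = (i, j)" and t_in: "x0 \<le> i" "i \<le> x1" "y0 \<le> j" "j \<le> y0 + 1"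
    using assms(2) by (cases t) (auto simp: tab_low_def)
  consider "i = x0" "j = y0" | "x0 < i" "j = y0" | "x0 < i" "j = y0 + 1"
    using t t_in assms(3) by (cases "j = y0"; cases "i = x0") auto
  then show ?thesis
  proof cases
    case 1
    show ?thesis unfolding t 1
      by (rule has_ham_path_peel[OF _ has_ham_path_row[of x0 x1 "y0 + 1"]],
          rule has_ham_path_join[OF has_ham_path_singleton[of "(x1 + 1, y0)"]
            has_ham_path_row_left[of x0 x1 y0]])
        (use assms(1) in \<open>auto simp: tab_low_def\<close>)
  next
    case 2
    show ?thesis unfolding t 2(2)
      by (rule has_ham_path_peel[OF _ has_ham_path_rect_from_x0y1[of "(i - 1, y0)" x0 "i - 1"
        y0 "y0 + 1"]],
          rule has_ham_path_peel[OF _ has_ham_path_row[of i x1 "y0 + 1"]],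
          rule has_ham_path_join[OF has_ham_path_singleton[of "(x1 + 1, y0)"]
            has_ham_path_row_left[of i x1 y0]])
        (use assms(1) 2 t_in in \<open>auto simp: tab_low_def\<close>)
  next
    case 3
    show ?thesis unfolding t 3(2)
      by (rule has_ham_path_peel[OF _ has_ham_path_rect_from_x0y1[of "(i - 1, y0)" x0 "i - 1"
        y0 "y0 + 1"]],
          rule has_ham_path_peel[OF _ has_ham_path_row[of i x1 y0]],
          rule has_ham_path_join[OF has_ham_path_singleton[of "(x1 + 1, y0)"]
            has_ham_path_row_left[of i x1 "y0 + 1"]])
        (use assms(1) 3 t_in in \<open>auto simp: tab_low_def\<close>)
  qed
qed

lemma has_ham_path_tab_low_from_x0y1_step:
  assumes "x0 < x1" "y0 + 2 \<le> y1" "t \<in> tab_low x0 x1 y0 y1" "t \<noteq> (x0, y1)"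
    and IH: "\<And>t. t \<in> tab_low x0 x1 y0 (y1 - 1) \<Longrightarrow> t \<noteq> (x1, y1 - 1) \<Longrightarrow>
      \<not> (y1 = y0 + 2 \<and> t = (x1, y0)) \<Longrightarrow> has_ham_path (tab_low x0 x1 y0 (y1 - 1)) (x1, y1 - 1) t"
  shows "has_ham_path (tab_low x0 x1 y0 y1) (x0, y1) t"
proof (cases "t = (x1 + 1, y0)")
  case True
  then show ?thesis using assms(1,2) by (simp add: has_ham_path_tab_low_top_corner_to_tab)
next
  case False
  then obtain i j where t: "t = (i, j)" and t_in: "x0 \<le> i" "i \<le> x1" "y0 \<le> j" "j \<le> y1"
    using assms(3) by (cases t) (auto simp: tab_low_def)
  consider "j = y1" | "t = (x1, y1 - 1)" | "y1 = y0 + 2" "t = (x1, y0)"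
    | "j < y1" "t \<noteq> (x1, y1 - 1)" "\<not> (y1 = y0 + 2 \<and> t = (x1, y0))"
    using t t_in by (cases "j = y1") auto
  then show ?thesis
  proof cases
    case 1
    show ?thesis unfolding t 1
      by (rule has_ham_path_peel[OF _ has_ham_path_column_down[of y0 y1 x0]],
          rule has_ham_path_peel[OF _ has_ham_path_row[of "x0 + 1" x1 y0]],
          rule has_ham_path_join[OF has_ham_path_singleton[of "(x1 + 1, y0)"]
            has_ham_path_rect_from_x1y0[of "(i, y1)" "x0 + 1" x1 "y0 + 1" y1]])
        (use assms(1,2,4) 1 t t_in in \<open>auto simp: tab_low_def\<close>)
  next
    case 2
    show ?thesis unfolding 2
      by (rule has_ham_path_peel[OF _ has_ham_path_row[of x0 x1 y1]],
          rule has_ham_path_peel[OF _ has_ham_path_rect_from_x1y1[of "(x1 - 1, y0)" x0 "x1 - 1"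
            y0 "y1 - 1"]],
          rule has_ham_path_peel[OF _ has_ham_path_singleton[of "(x1, y0)"]],
          rule has_ham_path_join[OF has_ham_path_singleton[of "(x1 + 1, y0)"]
            has_ham_path_column[of "y0 + 1" "y1 - 1" x1]])
        (use assms(1,2) in \<open>auto simp: tab_low_def\<close>)
  next
    case 3
    show ?thesis unfolding 3(2)
      by (rule has_ham_path_peel[OF _ has_ham_path_row[of x0 x1 y1]],
          rule has_ham_path_peel[OF _ has_ham_path_rect_from_x1y1[of "(x1 - 1, y0)" x0 "x1 - 1"
            y0 "y0 + 1"]],
          rule has_ham_path_peel[OF _ has_ham_path_singleton[of "(x1, y0 + 1)"]],
          rule has_ham_path_join[OF has_ham_path_singleton[of "(x1 + 1, y0)"]
            has_ham_path_singleton[of "(x1, y0)"]])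
        (use assms(1) 3 in \<open>auto simp: tab_low_def\<close>)
  next
    case 4
    have rest: "has_ham_path (tab_low x0 x1 y0 (y1 - 1)) (x1, y1 - 1) t"
      by (rule IH) (use 4 t t_in in \<open>auto simp: tab_low_def\<close>)
    show ?thesis
      by (rule has_ham_path_join[OF has_ham_path_row[of x0 x1 y1] rest])
        (use assms(1,2) in \<open>auto simp: tab_low_def\<close>)
  qed
qed

lemma has_ham_path_tab_low_column_then_rect:
  assumes "x0 < x1" "y0 < y1" "t \<in> rect x0 (x1 - 1) y0 y1" "t \<noteq> (x1 - 1, y0)"
    and "x0 = x1 - 1 \<Longrightarrow> t = (x0, y1)"
  shows "has_ham_path (tab_low x0 x1 y0 y1) (x1, y1) t"
  by (rule has_ham_path_join[OF has_ham_path_tab_low_column[of y0 y1 x1]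
        has_ham_path_rect_from_x1y0[of t x0 "x1 - 1" y0 y1]])
    (use assms in \<open>auto simp: tab_low_def\<close>)

lemma has_ham_path_tab_low_from_x1y1_thin:
  assumes "x0 < x1" "t \<in> tab_low x0 x1 y0 (y0 + 1)" "t \<noteq> (x1, y0 + 1)" "t \<noteq> (x1, y0)"
  shows "has_ham_path (tab_low x0 x1 y0 (y0 + 1)) (x1, y0 + 1) t"
proof (cases "t = (x1 + 1, y0)")
  case True
  then show ?thesis using assms(1) by (simp add: has_ham_path_tab_low_top_corner_to_tab)
next
  case False
  then obtain i j where t: "t = (i, j)" and t_in: "x0 \<le> i" "i < x1" "y0 \<le> j" "j \<le> y0 + 1"
    using assms(2-4) by (cases t) (auto simp: tab_low_def)
  show ?thesis
  proof (cases "j = y0")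
    case True
    show ?thesis unfolding t True
      by (rule has_ham_path_join[OF has_ham_path_tab_low_column[of y0 "y0 + 1" x1]
            has_ham_path_rect_from_x1y1[of "(i, y0)" x0 "x1 - 1" y0 "y0 + 1"]])
        (use t_in in \<open>auto simp: tab_low_def\<close>)
  next
    case False
    then show ?thesis
      using t t_in assms(1) by (intro has_ham_path_tab_low_column_then_rect) auto
  qed
qed

lemma has_ham_path_tab_low_from_x1y1_step:
  assumes "x0 < x1" "y0 + 2 \<le> y1" "t \<in> tab_low x0 x1 y0 y1" "t \<noteq> (x1, y1)"
    and IH: "\<And>t. t \<in> tab_low x0 x1 y0 (y1 - 1) \<Longrightarrow> t \<noteq> (x0, y1 - 1) \<Longrightarrow>
      has_ham_path (tab_low x0 x1 y0 (y1 - 1)) (x0, y1 - 1) t"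
  shows "has_ham_path (tab_low x0 x1 y0 y1) (x1, y1) t"
proof (cases "t = (x1 + 1, y0)")
  case True
  then show ?thesis using assms(1,2) by (simp add: has_ham_path_tab_low_top_corner_to_tab)
next
  case False
  then obtain i j where t: "t = (i, j)" and t_in: "x0 \<le> i" "i \<le> x1" "y0 \<le> j" "j \<le> y1"
    using assms(3) by (cases t) (auto simp: tab_low_def)
  consider "t \<in> rect x0 (x1 - 1) y0 y1" "t \<noteq> (x1 - 1, y0)" "x0 = x1 - 1 \<Longrightarrow> t = (x0, y1)"
    | "j < y1" "t \<noteq> (x0, y1 - 1)"
    | "x1 = x0 + 1" "t = (x0, y1 - 1)"
    using t t_in assms(1,2,4)
    by (cases "j = y1"; cases "t = (x0, y1 - 1)"; cases "x1 = x0 + 1") auto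
  then show ?thesis
  proof cases
    case 1
    then show ?thesis using assms(1,2) by (intro has_ham_path_tab_low_column_then_rect) auto
  next
    case 2
    have rest: "has_ham_path (tab_low x0 x1 y0 (y1 - 1)) (x0, y1 - 1) t"
      by (rule IH) (use 2 t t_in in \<open>auto simp: tab_low_def\<close>)
    show ?thesis
      by (rule has_ham_path_join[OF has_ham_path_row_left[of x0 x1 y1] rest])
        (use assms(1,2) in \<open>auto simp: tab_low_def\<close>)
  next
    case 3
    show ?thesis unfolding 3(2)
      by (rule has_ham_path_peel[OF _ has_ham_path_singleton[of "(x1, y1)"]],
          rule has_ham_path_peel[OF _ has_ham_path_singleton[of "(x0, y1)"]],
          rule has_ham_path_peel[OF _ has_ham_path_column_down[of "y0 + 1" "y1 - 1" x1]],
          rule has_ham_path_peel[OF _ has_ham_path_singleton[of "(x1 + 1, y0)"]],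
          rule has_ham_path_join[OF has_ham_path_singleton[of "(x1, y0)"]
            has_ham_path_column[of y0 "y1 - 1" x0]])
        (use assms(2) 3(1) in \<open>auto simp: tab_low_def\<close>)
  qed
qed

(* Removing the top row moves the start from one top corner to the other, so both claims are
   proved together by induction on the height. *)
lemma has_ham_path_tab_low_from_top_corners:
  assumes "x0 < x1" "y0 < y1" "t \<in> tab_low x0 x1 y0 y1"
  shows "(t \<noteq> (x0, y1) \<longrightarrow> has_ham_path (tab_low x0 x1 y0 y1) (x0, y1) t)
    \<and> (t \<noteq> (x1, y1) \<and> \<not> (y1 = y0 + 1 \<and> t = (x1, y0))
        \<longrightarrow> has_ham_path (tab_low x0 x1 y0 y1) (x1, y1) t)"
  using assms(2,3)
proof (induction "nat (y1 - y0)" arbitrary: y1 t rule: less_induct)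
  case less
  show ?case
  proof (cases "y1 = y0 + 1")
    case True
    show ?thesis unfolding True
      using has_ham_path_tab_low_from_x0y1_thin[OF assms(1)]
        has_ham_path_tab_low_from_x1y1_thin[OF assms(1)]
        less.prems(2) True by blast
  next
    case False
    then have "y0 + 2 \<le> y1" using less.prems(1) by simp
    have IH: "(t' \<noteq> (x0, y1 - 1) \<longrightarrow> has_ham_path (tab_low x0 x1 y0 (y1 - 1)) (x0, y1 - 1) t')
      \<and> (t' \<noteq> (x1, y1 - 1) \<and> \<not> (y1 - 1 = y0 + 1 \<and> t' = (x1, y0))
        \<longrightarrow> has_ham_path (tab_low x0 x1 y0 (y1 - 1)) (x1, y1 - 1) t')"
      if "t' \<in> tab_low x0 x1 y0 (y1 - 1)" for t'
      using False less.prems(1) that by (intro less.hyps) auto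
    show ?thesis
    proof (intro conjI impI)
      assume "t \<noteq> (x0, y1)"
      then show "has_ham_path (tab_low x0 x1 y0 y1) (x0, y1) t"
        using has_ham_path_tab_low_from_x0y1_step[OF assms(1) \<open>y0 + 2 \<le> y1\<close> less.prems(2)] IH
        by fastforce
    next
      assume "t \<noteq> (x1, y1) \<and> \<not> (y1 = y0 + 1 \<and> t = (x1, y0))"
      then show "has_ham_path (tab_low x0 x1 y0 y1) (x1, y1) t"
        using has_ham_path_tab_low_from_x1y1_step[OF assms(1) \<open>y0 + 2 \<le> y1\<close> less.prems(2)] IH
        by fastforce
    qed
  qed
qed

lemma has_ham_path_tab_low_from_x0y1:
  assumes "x0 < x1" "y0 < y1" "t \<in> tab_low x0 x1 y0 y1" "t \<noteq> (x0, y1)"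
  shows "has_ham_path (tab_low x0 x1 y0 y1) (x0, y1) t"
  using has_ham_path_tab_low_from_top_corners[OF assms(1-3)] assms(4) by blast

lemma has_ham_path_tab_low_from_x1y1:
  assumes "x0 < x1" "y0 < y1" "t \<in> tab_low x0 x1 y0 y1" "t \<noteq> (x1, y1)"
    and "\<not> (y1 = y0 + 1 \<and> t = (x1, y0))"
  shows "has_ham_path (tab_low x0 x1 y0 y1) (x1, y1) t"
  using has_ham_path_tab_low_from_top_corners[OF assms(1-3)] assms(4,5) by blast

definition tab_high :: "int \<Rightarrow> int \<Rightarrow> int \<Rightarrow> int \<Rightarrow> vtx set" where
  "tab_high x0 x1 y0 y1 = rect x0 x1 y0 y1 \<union> {(x1 + 1, y1)}"

lemma mem_tab_high_flip: "(x, y) \<in> tab_low x0 x1 y0 y1 \<longleftrightarrow> (x, y0 + y1 - y) \<in> tab_high x0 x1 y0 y1"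
  by (auto simp: tab_low_def tab_high_def)

lemma has_ham_path_tab_high_from_x0y0:
  assumes "x0 < x1" "y0 < y1" "t \<in> tab_high x0 x1 y0 y1" "t \<noteq> (x0, y0)"
  shows "has_ham_path (tab_high x0 x1 y0 y1) (x0, y0) t"
proof -
  obtain i j where t: "t = (i, j)" by fastforce
  have flipped: "has_ham_path (tab_low x0 x1 y0 y1) (x0, y1) (i, y0 + y1 - j)"
    by (rule has_ham_path_tab_low_from_x0y1) (use assms t in \<open>auto simp: tab_low_def tab_high_def\<close>)
  show ?thesis unfolding t
    by (rule has_ham_path_mirror_y[where c = "y0 + y1", OF _ mem_tab_high_flip])
      (use flipped in simp)
qed

lemma has_ham_path_tab_high_from_x1y0:
  assumes "x0 < x1" "y0 < y1" "t \<in> tab_high x0 x1 y0 y1" "t \<noteq> (x1, y0)"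
    and "\<not> (y1 = y0 + 1 \<and> t = (x1, y1))"
  shows "has_ham_path (tab_high x0 x1 y0 y1) (x1, y0) t"
proof -
  obtain i j where t: "t = (i, j)" by fastforce
  have flipped: "has_ham_path (tab_low x0 x1 y0 y1) (x1, y1) (i, y0 + y1 - j)"
    by (rule has_ham_path_tab_low_from_x1y1) (use assms t in \<open>auto simp: tab_low_def tab_high_def\<close>)
  show ?thesis unfolding t
    by (rule has_ham_path_mirror_y[where c = "y0 + y1", OF _ mem_tab_high_flip])
      (use flipped in simp)
qed

section \<open>C-blocks\<close>

(* cblock 1 a n is C(a + 1, n; 1, n - 2; 1, 1); for x0 > 1, cblock x0 a n is what is left of it
   once the columns left of x0 have been covered. *)
definition cblock :: "int \<Rightarrow> int \<Rightarrow> int \<Rightarrow> vtx set" where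
  "cblock x0 a n = rect x0 a 1 n \<union> {(a + 1, 1), (a + 1, n)}"

lemma has_ham_path_cblock_flip:
  assumes "has_ham_path (cblock x0 a n) (i, n + 1 - j) (i', n + 1 - j')"
  shows "has_ham_path (cblock x0 a n) (i, j) (i', j')"
  by (rule has_ham_path_mirror_y[OF assms]) (auto simp: cblock_def)

lemma has_ham_path_cblock_to_arm:
  assumes "2 \<le> a" "3 \<le> n" "s \<in> rect 1 a 1 n"
  shows "has_ham_path (cblock 1 a n) s (a + 1, 1)"
proof (cases "s = (a, 1)")
  case True
  have "has_ham_path (tab_high 1 a 1 n) (a, 1) (a, 2)"
    by (rule has_ham_path_tab_high_from_x1y0) (use assms in \<open>auto simp: tab_high_def\<close>)
  then show ?thesis unfolding True
    by (rule has_ham_path_join[OF _ has_ham_path_singleton])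
      (use assms in \<open>auto simp: cblock_def tab_high_def\<close>)
next
  case False
  have "has_ham_path (tab_high 1 a 1 n) s (a, 1)"
    by (rule has_ham_path_rev, rule has_ham_path_tab_high_from_x1y0)
      (use assms False in \<open>auto simp: tab_high_def\<close>)
  then show ?thesis
    by (rule has_ham_path_join[OF _ has_ham_path_singleton])
      (use assms in \<open>auto simp: cblock_def tab_high_def\<close>)
qed

lemma has_ham_path_cblock_split:
  assumes "2 \<le> a" "2 \<le> h" "h + 2 \<le> n" "s \<in> rect 1 a 1 h" "t \<in> rect 1 a (h + 1) n"
    and "(s \<noteq> (1, h) \<and> t \<noteq> (1, h + 1))
      \<or> (s \<noteq> (a, h) \<and> \<not> (h = 2 \<and> s = (a, 1)) \<and> t \<noteq> (a, h + 1) \<and> \<not> (n = h + 2 \<and> t = (a, n)))"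
  shows "has_ham_path (cblock 1 a n) s t"
  using assms(6)
proof
  assume left: "s \<noteq> (1, h) \<and> t \<noteq> (1, h + 1)"
  show ?thesis
    by (rule has_ham_path_join[OF has_ham_path_rev[OF has_ham_path_tab_low_from_x0y1[of 1 a 1 h s]]
          has_ham_path_tab_high_from_x0y0[of 1 a "h + 1" n t]])
      (use assms left in \<open>auto simp: cblock_def tab_low_def tab_high_def\<close>)
next
  assume right: "s \<noteq> (a, h) \<and> \<not> (h = 2 \<and> s = (a, 1)) \<and> t \<noteq> (a, h + 1) \<and> \<not> (n = h + 2 \<and> t = (a, n))"
  show ?thesis
    by (rule has_ham_path_join[OF has_ham_path_rev[OF has_ham_path_tab_low_from_x1y1[of 1 a 1 h s]]
          has_ham_path_tab_high_from_x1y0[of 1 a "h + 1" n t]])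
      (use assms right in \<open>auto simp: cblock_def tab_low_def tab_high_def\<close>)
qed

lemma has_ham_path_cblock_from_x0_1:
  assumes "x0 < a" "3 \<le> n" "t \<in> tab_high x0 a 2 n" "t \<noteq> (a, 2)" "\<not> (n = 3 \<and> t = (a, 3))"
  shows "has_ham_path (cblock x0 a n) (x0, 1) t"
  by (rule has_ham_path_peel[OF _ has_ham_path_row[of x0 a 1]],
      rule has_ham_path_join[OF has_ham_path_singleton[of "(a + 1, 1)"]
        has_ham_path_tab_high_from_x1y0])
    (use assms in \<open>auto simp: cblock_def tab_high_def\<close>)

lemma has_ham_path_cblock_column_up:
  assumes "x0 \<le> a" "3 \<le> n" "2 \<le> j" "j \<le> n" "x0 < a \<or> j = n"
  shows "has_ham_path (cblock x0 a n) (x0, 1) (x0, j)"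
proof (cases "x0 < a")
  case True
  then show ?thesis
    using assms by (intro has_ham_path_cblock_from_x0_1) (auto simp: tab_high_def)
next
  case False
  then have "x0 = a" "j = n" using assms by auto
  show ?thesis unfolding \<open>x0 = a\<close> \<open>j = n\<close>
    by (rule has_ham_path_peel[OF _ has_ham_path_singleton[of "(a, 1)"]],
        rule has_ham_path_peel[OF _ has_ham_path_singleton[of "(a + 1, 1)"]],
        rule has_ham_path_peel[OF _ has_ham_path_column[of 2 "n - 1" a]],
        rule has_ham_path_join[OF has_ham_path_singleton[of "(a + 1, n)"]
          has_ham_path_singleton[of "(a, n)"]])
      (use assms in \<open>auto simp: cblock_def\<close>)
qed

lemma has_ham_path_cblock_column_down:
  assumes "x0 \<le> a" "3 \<le> n" "1 \<le> j" "j < n" "x0 < a \<or> j = 1"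
  shows "has_ham_path (cblock x0 a n) (x0, n) (x0, j)"
proof -
  have up: "has_ham_path (cblock x0 a n) (x0, 1) (x0, n + 1 - j)"
    by (rule has_ham_path_cblock_column_up) (use assms in auto)
  show ?thesis by (rule has_ham_path_cblock_flip) (use up in simp)
qed

lemma has_ham_path_cblock_left_then_top:
  assumes "3 \<le> n" "2 \<le> u" "u \<le> a" "s \<in> rect 1 (u - 1) 1 n" "s \<noteq> (u - 1, n)"
    "u = 2 \<Longrightarrow> s = (1, 1)" "1 \<le> v" "v < n" "u < a \<or> v = 1"
  shows "has_ham_path (cblock 1 a n) s (u, v)"
  by (rule has_ham_path_join[OF has_ham_path_rev[OF has_ham_path_rect_from_x1y1[of s 1 "u - 1" 1 n]]
        has_ham_path_cblock_column_down[of u a n v]])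
    (use assms in \<open>auto simp: cblock_def\<close>)

lemma has_ham_path_cblock_left_then_bottom:
  assumes "3 \<le> n" "2 \<le> u" "u \<le> a" "s \<in> rect 1 (u - 1) 1 n"
    "u = 2 \<Longrightarrow> s = (1, n)" "1 < v" "v \<le> n" "u < a \<or> v = n"
  shows "has_ham_path (cblock 1 a n) s (u, v)"
proof (cases "s = (u - 1, 1)")
  case True
  show ?thesis unfolding True
    by (rule has_ham_path_join[OF has_ham_path_rect_from_x1y0[of "(u - 1, 2)" 1 "u - 1" 1 n]
          has_ham_path_cblock_column_up[of u a n v]])
      (use assms True in \<open>auto simp: cblock_def\<close>)
next
  case False
  show ?thesis
    by (rule has_ham_path_join[OF
          has_ham_path_rev[OF has_ham_path_rect_from_x1y0[of s 1 "u - 1" 1 n]]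
          has_ham_path_cblock_column_up[of u a n v]])
      (use assms False in \<open>auto simp: cblock_def\<close>)
qed

lemma has_ham_path_cblock_split_to_column_a:
  assumes "2 \<le> a" "2 \<le> h" "h + 2 \<le> n" "s \<in> rect 1 a 1 h" "s \<noteq> (a, h)" "\<not> (h = 2 \<and> s = (a, 1))"
  shows "has_ham_path (cblock 1 a n) s (a, h + 1)"
  by (rule has_ham_path_join[OF has_ham_path_rev[OF has_ham_path_tab_low_from_x1y1[of 1 a 1 h s]]
        has_ham_path_rev[OF has_ham_path_tab_high_from_x1y0[of 1 a "h + 1" n "(a - 1, h + 1)"]]])
    (use assms in \<open>auto simp: cblock_def tab_low_def tab_high_def\<close>)

lemma has_ham_path_cblock_row_to_a_far:
  assumes "3 \<le> v" "v + 2 \<le> n" "1 \<le> x" "x \<le> a - 2"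
  shows "has_ham_path (cblock 1 a n) (x, v) (a, v)"
  by (rule has_ham_path_peel[OF _ has_ham_path_row_left[of 1 x v]],
      rule has_ham_path_peel[OF _ has_ham_path_tab_high_from_x0y0[of 1 a "v + 1" n "(a, v + 1)"]],
      rule has_ham_path_peel[OF _ has_ham_path_row_left[of "x + 1" "a - 1" v]],
      rule has_ham_path_join[OF
        has_ham_path_rev[OF has_ham_path_tab_low_from_x1y1[of 1 a 1 "v - 1" "(x + 1, v - 1)"]]
        has_ham_path_singleton[of "(a, v)"]])
    (use assms in \<open>auto simp: cblock_def tab_low_def tab_high_def\<close>)

lemma has_ham_path_cblock_row_to_a_near:
  assumes "3 \<le> a" "3 \<le> v" "v + 2 \<le> n"
  shows "has_ham_path (cblock 1 a n) (a - 1, v) (a, v)"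
  by (rule has_ham_path_peel[OF _ has_ham_path_singleton[of "(a - 1, v)"]],
      rule has_ham_path_peel[OF _ has_ham_path_tab_high_from_x1y0[of 1 a "v + 1" n "(1, v + 1)"]],
      rule has_ham_path_peel[OF _ has_ham_path_row[of 1 "a - 2" v]],
      rule has_ham_path_join[OF
        has_ham_path_rev[OF has_ham_path_tab_low_from_x1y1[of 1 a 1 "v - 1" "(a - 1, v - 1)"]]
        has_ham_path_singleton[of "(a, v)"]])
    (use assms in \<open>auto simp: cblock_def tab_low_def tab_high_def\<close>)

lemma has_ham_path_cblock_left_pair_to_a2:
  assumes "4 \<le> n" "1 \<le> x" "x \<le> a - 2" "has_ham_path (rect 1 x 1 2) s (1, 2)"
  shows "has_ham_path (cblock 1 a n) s (a, 2)"
  by (rule has_ham_path_peel[OF _ assms(4)],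
      rule has_ham_path_peel[OF _ has_ham_path_tab_high_from_x0y0[of 1 a 3 n "(a, 3)"]],
      rule has_ham_path_peel[OF _ has_ham_path_rect_from_x1y1[of "(a - 1, 1)" "x + 1" "a - 1" 1 2]],
      rule has_ham_path_peel[OF _ has_ham_path_singleton[of "(a, 1)"]],
      rule has_ham_path_join[OF has_ham_path_singleton[of "(a + 1, 1)"]
        has_ham_path_singleton[of "(a, 2)"]])
    (use assms(1-3) in \<open>auto simp: cblock_def tab_high_def\<close>)

lemma has_ham_path_cblock_row2_to_a:
  assumes "3 \<le> a" "4 \<le> n" "1 \<le> x" "x \<le> a - 1"
  shows "has_ham_path (cblock 1 a n) (x, 2) (a, 2)"
proof -
  consider "x = 1" | "2 \<le> x" "x \<le> a - 2" | "x = a - 1" using assms by linarith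
  then show ?thesis
  proof cases
    case 1
    show ?thesis unfolding 1
      by (rule has_ham_path_peel[OF _ has_ham_path_singleton[of "(1, 2)"]],
          rule has_ham_path_peel[OF _ has_ham_path_tab_high_from_x0y0[of 1 a 3 n "(a, 3)"]],
          rule has_ham_path_peel[OF _ has_ham_path_row_left[of 2 "a - 1" 2]],
          rule has_ham_path_peel[OF _ has_ham_path_row[of 1 a 1]],
          rule has_ham_path_join[OF has_ham_path_singleton[of "(a + 1, 1)"]
            has_ham_path_singleton[of "(a, 2)"]])
        (use assms in \<open>auto simp: cblock_def tab_high_def\<close>)
  next
    case 2
    have "has_ham_path (rect 1 x 1 2) (x, 2) (1, 2)"
      by (rule has_ham_path_rect_from_x1y1) (use 2 in auto)
    with 2 show ?thesis using assms(2) by (intro has_ham_path_cblock_left_pair_to_a2) auto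
  next
    case 3
    show ?thesis unfolding 3
      by (rule has_ham_path_peel[OF _ has_ham_path_singleton[of "(a - 1, 2)"]],
          rule has_ham_path_peel[OF _ has_ham_path_tab_high_from_x1y0[of 1 a 3 n "(1, 3)"]],
          rule has_ham_path_peel[OF _ has_ham_path_rect_from_x0y1[of "(a - 2, 1)" 1 "a - 2" 1 2]],
          rule has_ham_path_peel[OF _ has_ham_path_row[of "a - 1" a 1]],
          rule has_ham_path_join[OF has_ham_path_singleton[of "(a + 1, 1)"]
            has_ham_path_singleton[of "(a, 2)"]])
        (use assms in \<open>auto simp: cblock_def tab_high_def\<close>)
  qed
qed

lemma has_ham_path_cblock_row1_to_a2:
  assumes "3 \<le> a" "4 \<le> n" "1 \<le> x" "x \<le> a - 1"
  shows "has_ham_path (cblock 1 a n) (x, 1) (a, 2)"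
proof (cases "x \<le> a - 2")
  case True
  have "has_ham_path (rect 1 x 1 2) (x, 1) (1, 2)"
    by (rule has_ham_path_rect_from_x1y0) (use assms in auto)
  with True show ?thesis using assms(2,3) by (intro has_ham_path_cblock_left_pair_to_a2) auto
next
  case False
  then have "x = a - 1" using assms by simp
  show ?thesis unfolding \<open>x = a - 1\<close>
    by (rule has_ham_path_peel[OF _ has_ham_path_row_left[of 1 "a - 1" 1]],
        rule has_ham_path_peel[OF _ has_ham_path_singleton[of "(1, 2)"]],
        rule has_ham_path_peel[OF _ has_ham_path_tab_high_from_x0y0[of 1 a 3 n "(2, 3)"]],
        rule has_ham_path_peel[OF _ has_ham_path_row[of 2 "a - 1" 2]],
        rule has_ham_path_peel[OF _ has_ham_path_singleton[of "(a, 1)"]],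
        rule has_ham_path_join[OF has_ham_path_singleton[of "(a + 1, 1)"]
          has_ham_path_singleton[of "(a, 2)"]])
      (use assms in \<open>auto simp: cblock_def tab_high_def\<close>)
qed

lemma has_ham_path_cblock_column_pair:
  assumes "3 \<le> n" "1 \<le> x" "x \<le> a - 1"
  shows "has_ham_path (cblock 1 a n) (x, 1) (x, 2)"
proof (cases "x = 1")
  case True
  show ?thesis unfolding True
    by (rule has_ham_path_peel[OF _ has_ham_path_singleton[of "(1, 1)"]],
        rule has_ham_path_peel[OF _ has_ham_path_cblock_column_up[of 2 a n n]],
        rule has_ham_path_join[OF has_ham_path_column_down[of 3 n 1]
          has_ham_path_singleton[of "(1, 2)"]])
      (use assms in \<open>auto simp: cblock_def\<close>)
next
  case False
  show ?thesis
    by (rule has_ham_path_peel[OF _ has_ham_path_singleton[of "(x, 1)"]],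
        rule has_ham_path_peel[OF _ has_ham_path_cblock_column_up[of "x + 1" a n n]],
        rule has_ham_path_peel[OF _ has_ham_path_rect_from_x1y1[of "(1, 3)" 1 x 3 n]],
        rule has_ham_path_join[OF has_ham_path_rect_from_x0y1[of "(x - 1, 1)" 1 "x - 1" 1 2]
          has_ham_path_singleton[of "(x, 2)"]])
      (use assms False in \<open>auto simp: cblock_def\<close>)
qed

lemma has_ham_path_cblock3_column:
  assumes "1 \<le> x" "x \<le> a - 1"
  shows "has_ham_path (cblock 1 a 3) (x, 1) (x, 3)"
proof (cases "x = 1")
  case True
  show ?thesis unfolding True
    by (rule has_ham_path_peel[OF _ has_ham_path_singleton[of "(1, 1)"]],
        rule has_ham_path_peel[OF _ has_ham_path_cblock_column_up[of 2 a 3 3]],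
        rule has_ham_path_join[OF has_ham_path_singleton[of "(1, 2)"]
          has_ham_path_singleton[of "(1, 3)"]])
      (use assms in \<open>auto simp: cblock_def\<close>)
next
  case False
  show ?thesis
    by (rule has_ham_path_peel[OF _ has_ham_path_singleton[of "(x, 1)"]],
        rule has_ham_path_peel[OF _ has_ham_path_cblock_column_up[of "x + 1" a 3 3]],
        rule has_ham_path_peel[OF _ has_ham_path_singleton[of "(x, 2)"]],
        rule has_ham_path_join[OF has_ham_path_rect_from_x1y0[of "(x - 1, 3)" 1 "x - 1" 1 3]
          has_ham_path_singleton[of "(x, 3)"]])
      (use assms False in \<open>auto simp: cblock_def\<close>)
qed

lemma has_ham_path_cblock_row_pair:
  assumes "3 \<le> a" "2 \<le> j" "j \<le> n - 1"
  shows "has_ham_path (cblock 1 a n) (1, j) (2, j)"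
  by (rule has_ham_path_peel[OF _ has_ham_path_singleton[of "(1, j)"]],
      rule has_ham_path_peel[OF _ has_ham_path_rect_from_x0y1[of "(2, 1)" 1 2 1 "j - 1"]],
      rule has_ham_path_peel[OF _ has_ham_path_cblock_column_up[of 3 a n n]],
      rule has_ham_path_join[OF has_ham_path_rect_from_x1y1[of "(1, j + 1)" 1 2 "j + 1" n]
        has_ham_path_singleton[of "(2, j)"]])
    (use assms in \<open>auto simp: cblock_def\<close>)

lemma has_ham_path_cblock_12_21:
  assumes "3 \<le> a" "3 \<le> n"
  shows "has_ham_path (cblock 1 a n) (1, 2) (2, 1)"
  by (rule has_ham_path_peel[OF _ has_ham_path_singleton[of "(1, 2)"]],
      rule has_ham_path_peel[OF _ has_ham_path_singleton[of "(1, 1)"]],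
      rule has_ham_path_peel[OF _ has_ham_path_singleton[of "(2, 2)"]],
      rule has_ham_path_peel[OF _ has_ham_path_rect_from_x0y0[of "(2, n)" 1 2 3 n]],
      rule has_ham_path_join[OF has_ham_path_rev[OF has_ham_path_cblock_column_up[of 3 a n n]]
        has_ham_path_singleton[of "(2, 1)"]])
    (use assms in \<open>auto simp: cblock_def\<close>)

lemma has_ham_path_cblock2_to_top_corner:
  assumes "4 \<le> n"
  shows "has_ham_path (cblock 1 2 n) (1, n - 2) (2, n)"
  by (rule has_ham_path_peel[OF _ has_ham_path_tab_low_from_x0y1[of 1 2 1 "n - 2" "(2, n - 2)"]],
      rule has_ham_path_peel[OF _ has_ham_path_singleton[of "(1, n - 1)"]],
      rule has_ham_path_peel[OF _ has_ham_path_singleton[of "(1, n)"]],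
      rule has_ham_path_peel[OF _ has_ham_path_singleton[of "(2, n - 1)"]],
      rule has_ham_path_join[OF has_ham_path_singleton[of "(3, n)"]
        has_ham_path_singleton[of "(2, n)"]])
    (use assms in \<open>auto simp: cblock_def tab_low_def\<close>)

lemma has_ham_path_cblock_row_to_a:
  assumes "3 \<le> a" "2 \<le> v" "v + 2 \<le> n" "1 \<le> x" "x \<le> a - 1"
  shows "has_ham_path (cblock 1 a n) (x, v) (a, v)"
proof -
  consider "v = 2" | "3 \<le> v" "x \<le> a - 2" | "3 \<le> v" "x = a - 1" using assms by linarith
  then show ?thesis
  proof cases
    case 1
    then show ?thesis using assms has_ham_path_cblock_row2_to_a by simp
  next
    case 2
    then show ?thesis using assms has_ham_path_cblock_row_to_a_far by simp
  next
    case 3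
    then show ?thesis using assms has_ham_path_cblock_row_to_a_near by simp
  qed
qed

lemma has_ham_path_cblock_same_column:
  assumes "2 \<le> a" "3 \<le> n" "1 \<le> x" "x \<le> a" "1 \<le> y" "y < v" "v \<le> n"
    and "\<not> (x = a \<and> y = 1 \<and> v = 2)" "\<not> (x = a \<and> y = n - 1 \<and> v = n)"
    and "\<not> (n = 3 \<and> x = a \<and> y = 1 \<and> v = 3)"
  shows "has_ham_path (cblock 1 a n) (x, y) (x, v)"
proof -
  consider "max y 2 \<le> min (v - 1) (n - 2)" | "y = 1" "v = 2" | "y = n - 1" "v = n"
    | "n = 3" "y = 1" "v = 3"
    using assms(2,5-7) by linarith
  then show ?thesis
  proof cases
    case 1
    show ?thesis
      by (rule has_ham_path_cblock_split[of a "max y 2"]) (use assms 1 in auto)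
  next
    case 2
    show ?thesis unfolding 2
      by (rule has_ham_path_cblock_column_pair) (use assms 2 in auto)
  next
    case 3
    have flipped: "has_ham_path (cblock 1 a n) (x, 2) (x, 1)"
      by (rule has_ham_path_rev, rule has_ham_path_cblock_column_pair) (use assms 3 in auto)
    show ?thesis by (rule has_ham_path_cblock_flip) (use flipped 3 in simp)
  next
    case 4
    show ?thesis unfolding 4
      by (rule has_ham_path_cblock3_column) (use assms 4 in auto)
  qed
qed

lemma has_ham_path_cblock_to_column_a:
  assumes "2 \<le> a" "3 \<le> n" "1 \<le> x" "x < a" "1 \<le> y" "y \<le> v" "2 \<le> v" "v \<le> n - 1"
    and "\<not> (a = 2 \<and> y = v)" "\<not> (a = 2 \<and> x = 1 \<and> y = 1 \<and> v = 2)" "\<not> (n = 3 \<and> 2 < a \<and> v = 2)"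
  shows "has_ham_path (cblock 1 a n) (x, y) (a, v)"
proof -
  consider "y < v" "3 \<le> v" | "y = 1" "v = 2" | "y = v" "v + 2 \<le> n" | "y = v" "v = n - 1" "4 \<le> n"
    using assms by linarith
  then show ?thesis
  proof cases
    case 1
    have "has_ham_path (cblock 1 a n) (x, y) (a, v - 1 + 1)"
      by (rule has_ham_path_cblock_split_to_column_a) (use assms 1 in auto)
    then show ?thesis by simp
  next
    case 2
    show ?thesis unfolding 2
      by (rule has_ham_path_cblock_row1_to_a2) (use assms 2 in auto)
  next
    case 3
    show ?thesis unfolding \<open>y = v\<close>
      by (rule has_ham_path_cblock_row_to_a) (use assms 3 in auto)
  next
    case 4
    have flipped: "has_ham_path (cblock 1 a n) (x, 2) (a, 2)"
      by (rule has_ham_path_cblock_row_to_a) (use assms 4 in auto)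
    show ?thesis by (rule has_ham_path_cblock_flip) (use flipped 4 in simp)
  qed
qed

lemma has_ham_path_cblock_column1_to_column2:
  assumes "2 \<le> a" "3 \<le> n" "1 \<le> y" "y \<le> v" "v \<le> n" "2 < a \<or> v = 1 \<or> v = n"
    and "\<not> (a = 2 \<and> ((y = 1 \<and> v = 2) \<or> (y = n - 1 \<and> v = n)))"
    and "\<not> (n = 3 \<and> a = 2 \<and> y = 1 \<and> v = 3)"
  shows "has_ham_path (cblock 1 a n) (1, y) (2, v)"
proof -
  consider "y = 1" "v < n" | "y = 1" "v = n" | "y = n" | "1 < y" "y = v" "v < n"
    | "1 < y" "y + 1 < v" "v \<le> n - 1"
    | "1 < y" "y + 2 \<le> n" "v = y + 1 \<or> v = n" "\<not> (a = 2 \<and> v = y + 1)"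
      "\<not> (a = 2 \<and> y = n - 2 \<and> v = n)"
    | "y = n - 1" "v = n" | "a = 2" "y = n - 2" "v = n"
    using assms by (smt (verit))
  then show ?thesis
  proof cases
    case 1
    then show ?thesis using assms by (intro has_ham_path_cblock_left_then_top) auto
  next
    case 2
    show ?thesis unfolding 2
      by (rule has_ham_path_cblock_from_x0_1) (use assms 2 in \<open>auto simp: tab_high_def\<close>)
  next
    case 3
    then show ?thesis using assms by (intro has_ham_path_cblock_left_then_bottom) auto
  next
    case 4
    then show ?thesis using assms has_ham_path_cblock_row_pair[of a y n] by auto
  next
    case 5
    then show ?thesis using assms by (intro has_ham_path_cblock_split[of a "v - 1"]) auto
  next
    case 6
    then show ?thesis using assms by (intro has_ham_path_cblock_split[of a y]) auto
  next
    case 7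
    have flipped: "has_ham_path (cblock 1 a n) (1, 2) (2, 1)"
      by (rule has_ham_path_cblock_12_21) (use assms 7 in auto)
    show ?thesis by (rule has_ham_path_cblock_flip) (use flipped 7 in simp)
  next
    case 8
    then show ?thesis using assms has_ham_path_cblock2_to_top_corner[of n] by auto
  qed
qed

lemma has_ham_path_cblock_across:
  assumes "2 \<le> a" "3 \<le> n" "1 \<le> x" "x < u" "u \<le> a" "1 \<le> y" "y \<le> v" "v \<le> n"
    and "u < a \<or> v = 1 \<or> v = n"
    and "\<not> (a = 2 \<and> x = 1 \<and> ((y = 1 \<and> v = 2) \<or> (y = n - 1 \<and> v = n)))"
    and "\<not> (n = 3 \<and> a = 2 \<and> x = 1 \<and> y = 1 \<and> v = 3)"
  shows "has_ham_path (cblock 1 a n) (x, y) (u, v)"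
proof -
  consider "3 \<le> u" "v < n" | "3 \<le> u" "v = n" | "u = 2" "x = 1" using assms by linarith
  then show ?thesis
  proof cases
    case 1
    then show ?thesis using assms by (intro has_ham_path_cblock_left_then_top) auto
  next
    case 2
    then show ?thesis using assms by (intro has_ham_path_cblock_left_then_bottom) auto
  next
    case 3
    show ?thesis unfolding 3
      by (rule has_ham_path_cblock_column1_to_column2) (use assms 3 in auto)
  qed
qed

(* The configurations excluded by the hypotheses: an arm cut off by s and t (F1), s and t cutting
   the block of width 2 between two rows (F1), (F7) and (F8). *)
definition cblock_forbidden :: "int \<Rightarrow> int \<Rightarrow> int \<Rightarrow> int \<Rightarrow> int \<Rightarrow> int \<Rightarrow> bool" where
  "cblock_forbidden a n x y u v \<longleftrightarrow>
     (x = a \<and> u = a \<and>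
       ((y = 1 \<and> v = 2) \<or> (y = 2 \<and> v = 1) \<or> (y = n - 1 \<and> v = n) \<or> (y = n \<and> v = n - 1)))
   \<or> (a = 2 \<and> x \<noteq> u \<and> y = v \<and> 2 \<le> y \<and> y \<le> n - 1)
   \<or> (a = 2 \<and> x = 1 \<and> u = 2 \<and>
       ((y = 1 \<and> v = 2) \<or> (y = 2 \<and> v = 1) \<or> (y = n - 1 \<and> v = n) \<or> (y = n \<and> v = n - 1)))
   \<or> (n = 3 \<and> ((x = a \<and> u = a \<and> \<bar>y - v\<bar> = 2) \<or> (a = 2 \<and> x = 1 \<and> u = 2 \<and> \<bar>y - v\<bar> = 2)
       \<or> (2 < a \<and> x < a \<and> u = a \<and> v = 2)))"

lemma cblock_forbidden_flip:
  "cblock_forbidden a n x (n + 1 - y) u (n + 1 - v) \<longleftrightarrow> cblock_forbidden a n x y u v"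
proof -
  have pairs: "((n + 1 - y = 1 \<and> n + 1 - v = 2) \<or> (n + 1 - y = 2 \<and> n + 1 - v = 1)
      \<or> (n + 1 - y = n - 1 \<and> n + 1 - v = n) \<or> (n + 1 - y = n \<and> n + 1 - v = n - 1))
    \<longleftrightarrow> ((y = 1 \<and> v = 2) \<or> (y = 2 \<and> v = 1) \<or> (y = n - 1 \<and> v = n) \<or> (y = n \<and> v = n - 1))"
    by auto
  have row: "(n + 1 - y = n + 1 - v \<and> 2 \<le> n + 1 - y \<and> n + 1 - y \<le> n - 1)
    \<longleftrightarrow> (y = v \<and> 2 \<le> y \<and> y \<le> n - 1)"
    by auto
  have dist: "\<bar>(n + 1 - y) - (n + 1 - v)\<bar> = \<bar>y - v\<bar>"
    by (simp add: abs_minus_commute)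
  have middle: "n = 3 \<Longrightarrow> n + 1 - v = 2 \<longleftrightarrow> v = 2"
    by auto
  show ?thesis
    unfolding cblock_forbidden_def pairs row dist by (simp add: middle cong: conj_cong)
qed

lemma has_ham_path_cblock_ordered:
  assumes "2 \<le> a" "3 \<le> n" "(x, y) \<in> rect 1 a 1 n" "(u, v) \<in> rect 1 a 1 n" "(x, y) \<noteq> (u, v)"
    and "x \<le> u" "y \<le> v" "\<not> cblock_forbidden a n x y u v"
  shows "has_ham_path (cblock 1 a n) (x, y) (u, v)"
proof -
  have arms: "\<not> (x = a \<and> u = a \<and> ((y = 1 \<and> v = 2) \<or> (y = n - 1 \<and> v = n)))"
    using assms(8) unfolding cblock_forbidden_def by auto
  have cut: "\<not> (a = 2 \<and> y = v \<and> 2 \<le> y \<and> y \<le> n - 1 \<and> x \<noteq> u)"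
    using assms(8) unfolding cblock_forbidden_def by auto
  have no_F7: "\<not> (a = 2 \<and> x = 1 \<and> u = 2 \<and> ((y = 1 \<and> v = 2) \<or> (y = n - 1 \<and> v = n)))"
    using assms(8) unfolding cblock_forbidden_def by auto
  have no_F8: "\<not> (n = 3 \<and> ((x = a \<and> u = a \<and> y = 1 \<and> v = 3) \<or> (a = 2 \<and> x = 1 \<and> u = 2 \<and> y = 1 \<and> v = 3)
      \<or> (2 < a \<and> x < a \<and> u = a \<and> v = 2)))"
    using assms(7,8) unfolding cblock_forbidden_def by auto
  consider "x = u" | "x < u" "u = a" "2 \<le> v" "v \<le> n - 1" | "x < u" "u < a \<or> v = 1 \<or> v = n"
    using assms(3,4,6) by fastforce
  then show ?thesis
  proof cases
    case 1
    show ?thesis unfolding 1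
      by (rule has_ham_path_cblock_same_column) (use assms arms no_F8 1 in auto)
  next
    case 2
    show ?thesis unfolding \<open>u = a\<close>
      by (rule has_ham_path_cblock_to_column_a) (use assms cut no_F7 no_F8 2 in auto)
  next
    case 3
    then show ?thesis using assms no_F7 no_F8 by (intro has_ham_path_cblock_across) auto
  qed
qed

lemma has_ham_path_cblock_rect_pair:
  assumes "2 \<le> a" "3 \<le> n" "(x, y) \<in> rect 1 a 1 n" "(u, v) \<in> rect 1 a 1 n" "(x, y) \<noteq> (u, v)"
    and "x \<le> u" "\<not> cblock_forbidden a n x y u v"
  shows "has_ham_path (cblock 1 a n) (x, y) (u, v)"
proof (cases "y \<le> v")
  case True
  then show ?thesis using assms by (intro has_ham_path_cblock_ordered) auto
next
  case False
  have "\<not> cblock_forbidden a n x (n + 1 - y) u (n + 1 - v)"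
    using assms(7) by (simp add: cblock_forbidden_flip)
  then have flipped: "has_ham_path (cblock 1 a n) (x, n + 1 - y) (u, n + 1 - v)"
    using assms(1-6) False by (intro has_ham_path_cblock_ordered) auto
  show ?thesis by (rule has_ham_path_cblock_flip) (use flipped in simp)
qed

section \<open>Disconnecting vertex pairs\<close>

lemma not_sg_connected_if_separated:
  assumes "u \<in> W" "v \<in> W" "Q u" "\<not> Q v"
    and "\<And>w w'. w \<in> W \<Longrightarrow> w' \<in> W \<Longrightarrow> Q w \<Longrightarrow> \<not> Q w' \<Longrightarrow> \<not> sg_adj w w'"
  shows "\<not> sg_connected W"
proof
  assume "sg_connected W"
  then obtain P where P: "sg_walk W P" "hd P = u" "last P = v"
    using assms(1,2) unfolding sg_connected_def by blast
  have "Q (P ! i)" if "i < length P" for i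
    using that
  proof (induction i)
    case 0
    then show ?case using P assms(3) by (simp add: hd_conv_nth[symmetric])
  next
    case (Suc i)
    then have "sg_adj (P ! i) (P ! Suc i)" "P ! i \<in> W" "P ! Suc i \<in> W"
      using P(1) by (auto simp: sg_walk_def)
    then show ?case using Suc assms(5) by fastforce
  qed
  then have "Q (last P)" using P(1) by (simp add: sg_walk_def last_conv_nth)
  then show False using P(3) assms(4) by simp
qed

lemma not_sg_connected_if_isolated:
  assumes "u \<in> W" "v \<in> W" "u \<noteq> v" "\<And>w. w \<in> W \<Longrightarrow> \<not> sg_adj u w"
  shows "\<not> sg_connected W"
  by (rule not_sg_connected_if_separated[of u W v "\<lambda>w. w = u"]) (use assms in auto)

lemma sg_adj_cblock_arms:
  assumes "3 \<le> n" "w \<in> cblock 1 a n"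
  shows "sg_adj (a + 1, 1) w \<Longrightarrow> w = (a, 1) \<or> w = (a, 2)"
    and "sg_adj (a + 1, n) w \<Longrightarrow> w = (a, n) \<or> w = (a, n - 1)"
  using assms by (cases w; auto simp: cblock_def)+

lemma not_sg_connected_cblock_arm_cut:
  assumes "2 \<le> a" "3 \<le> n" "{s, t} = {(a, 1), (a, 2)} \<or> {s, t} = {(a, n - 1), (a, n)}"
  shows "\<not> sg_connected (cblock 1 a n - {s, t})"
proof -
  let ?W = "cblock 1 a n - {s, t}"
  obtain arm where arm: "arm \<in> ?W" "arm \<noteq> (1, 1)" "\<And>w. w \<in> ?W \<Longrightarrow> \<not> sg_adj arm w"
  proof (cases "{s, t} = {(a, 1), (a, 2)}")
    case True
    show ?thesis
    proof (rule that[of "(a + 1, 1)"])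
      show "(a + 1, 1) \<in> ?W" "(a + 1, 1) \<noteq> (1, 1)"
        using True assms(1) by (auto simp: cblock_def doubleton_eq_iff)
      show "\<not> sg_adj (a + 1, 1) w" if "w \<in> ?W" for w
        using that True sg_adj_cblock_arms(1)[OF assms(2), of w] by auto
    qed
  next
    case False
    then have st: "{s, t} = {(a, n - 1), (a, n)}" using assms(3) by simp
    show ?thesis
    proof (rule that[of "(a + 1, n)"])
      show "(a + 1, n) \<in> ?W" "(a + 1, n) \<noteq> (1, 1)"
        using st assms(1,2) by (auto simp: cblock_def doubleton_eq_iff)
      show "\<not> sg_adj (a + 1, n) w" if "w \<in> ?W" for w
        using that st sg_adj_cblock_arms(2)[OF assms(2), of w] by auto
    qed
  qed
  moreover have "(1, 1) \<in> ?W"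
    using assms by (auto simp: cblock_def doubleton_eq_iff)
  ultimately show ?thesis
    using not_sg_connected_if_isolated[of _ ?W "(1, 1)"] by metis
qed

lemma not_sg_connected_cblock2_row_cut:
  assumes "3 \<le> n" "2 \<le> y" "y \<le> n - 1" "{s, t} = {(1, y), (2, y)}"
  shows "\<not> sg_connected (cblock 1 2 n - {s, t})"
proof (rule not_sg_connected_if_separated[of "(1, 1)" _ "(1, n)" "\<lambda>w. snd w < y"])
  let ?W = "cblock 1 2 n - {s, t}"
  show "(1, 1) \<in> ?W" "(1, n) \<in> ?W"
    using assms by (auto simp: cblock_def doubleton_eq_iff)
  show "snd (1 :: int, 1 :: int) < y" "\<not> snd (1 :: int, n) < y"
    using assms by auto
  show "\<not> sg_adj w w'" if "w \<in> ?W" "w' \<in> ?W" "snd w < y" "\<not> snd w' < y" for w w'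
  proof
    assume "sg_adj w w'"
    then have "snd w' = y" using that(3,4) by (auto simp: sg_adj_def)
    then show False
      using that(2) assms by (cases w') (auto simp: cblock_def doubleton_eq_iff)
  qed
qed

lemma not_cblock_forbidden:
  assumes "2 \<le> a" "3 \<le> n" "s \<in> rect 1 a 1 n" "t \<in> rect 1 a 1 n" "s = (x, y)" "t = (u, v)"
    and conn: "sg_connected (cblock 1 a n - {s, t})"
    and "\<not> F7 (a + 1) n a 1 1 s t" "\<not> F8 (a + 1) n a 1 1 1 s t"
  shows "\<not> cblock_forbidden a n x y u v"
proof -
  have arms: "\<not> (x = a \<and> u = a \<and>
      ((y = 1 \<and> v = 2) \<or> (y = 2 \<and> v = 1) \<or> (y = n - 1 \<and> v = n) \<or> (y = n \<and> v = n - 1)))"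
  proof
    assume "x = a \<and> u = a \<and>
      ((y = 1 \<and> v = 2) \<or> (y = 2 \<and> v = 1) \<or> (y = n - 1 \<and> v = n) \<or> (y = n \<and> v = n - 1))"
    then have "{s, t} = {(a, 1), (a, 2)} \<or> {s, t} = {(a, n - 1), (a, n)}"
      using assms(5,6) by auto
    then show False using not_sg_connected_cblock_arm_cut[OF assms(1,2)] conn by blast
  qed
  have row_cut: "\<not> (a = 2 \<and> x \<noteq> u \<and> y = v \<and> 2 \<le> y \<and> y \<le> n - 1)"
  proof
    assume *: "a = 2 \<and> x \<noteq> u \<and> y = v \<and> 2 \<le> y \<and> y \<le> n - 1"
    then have "{s, t} = {(1, y), (2, y)}"
      using assms(3-6) by auto
    then show False using not_sg_connected_cblock2_row_cut[OF assms(2)] * conn by blast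
  qed
  have no_F7: "\<not> (a = 2 \<and> x = 1 \<and> u = 2 \<and>
      ((y = 1 \<and> v = 2) \<or> (y = 2 \<and> v = 1) \<or> (y = n - 1 \<and> v = n) \<or> (y = n \<and> v = n - 1)))"
    using assms(5,6,8) by (auto simp: F7_def)
  have no_F8: "\<not> (n = 3 \<and> ((x = a \<and> u = a \<and> \<bar>y - v\<bar> = 2) \<or> (a = 2 \<and> x = 1 \<and> u = 2 \<and> \<bar>y - v\<bar> = 2)
      \<or> (2 < a \<and> x < a \<and> u = a \<and> v = 2)))"
    using assms(1,5,6,9) by (auto simp: F8_def abs_minus_commute)
  show ?thesis
    using arms row_cut no_F7 no_F8 unfolding cblock_forbidden_def by blast
qed

section \<open>C-shaped graphs\<close>

lemma has_ham_path_cblock: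
  assumes "2 \<le> a" "3 \<le> n" "s \<in> cblock 1 a n" "t \<in> cblock 1 a n" "s \<noteq> t" "fst s \<le> fst t"
    and "sg_connected (cblock 1 a n - {s, t})"
    and "\<not> F7 (a + 1) n a 1 1 s t" "\<not> F8 (a + 1) n a 1 1 1 s t"
  shows "has_ham_path (cblock 1 a n) s t"
proof -
  obtain x y u v where st: "s = (x, y)" "t = (u, v)" by fastforce
  have arms_path: "has_ham_path (cblock 1 a n) (a + 1, 1) (a + 1, n)"
    by (rule has_ham_path_peel[OF _ has_ham_path_singleton[of "(a + 1, 1)"]],
        rule has_ham_path_join[OF has_ham_path_rect_from_x1y0[of "(a, n)" 1 a 1 n]
          has_ham_path_singleton[of "(a + 1, n)"]])
      (use assms(1,2) in \<open>auto simp: cblock_def\<close>)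
  have "s \<in> rect 1 a 1 n \<or> s = (a + 1, 1) \<or> s = (a + 1, n)"
    and "t \<in> rect 1 a 1 n \<or> t = (a + 1, 1) \<or> t = (a + 1, n)"
    using assms(3,4) by (auto simp: cblock_def)
  then consider "s \<in> rect 1 a 1 n" "t \<in> rect 1 a 1 n" | "s \<in> rect 1 a 1 n" "t = (a + 1, 1)"
    | "s \<in> rect 1 a 1 n" "t = (a + 1, n)" | "s = (a + 1, 1)" "t = (a + 1, n)"
    | "s = (a + 1, n)" "t = (a + 1, 1)"
    using assms(5,6) st by auto
  then show ?thesis
  proof cases
    case 1
    have "\<not> cblock_forbidden a n x y u v"
      by (rule not_cblock_forbidden[OF assms(1,2) 1 st assms(7-9)])
    then show ?thesis unfolding st
      by (intro has_ham_path_cblock_rect_pair) (use 1 st assms(1,2,5,6) in auto)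
  next
    case 2
    then show ?thesis using assms(1,2) has_ham_path_cblock_to_arm by simp
  next
    case 3
    have flipped: "has_ham_path (cblock 1 a n) (x, n + 1 - y) (a + 1, 1)"
      by (rule has_ham_path_cblock_to_arm) (use assms(1,2) 3 st in auto)
    show ?thesis unfolding st(1) 3(2) by (rule has_ham_path_cblock_flip) (use flipped in simp)
  next
    case 4
    then show ?thesis using arms_path by simp
  next
    case 5
    then show ?thesis using has_ham_path_rev[OF arms_path] by simp
  qed
qed

lemma Cshape_eq_cblock: "1 \<le> a \<Longrightarrow> 1 \<le> n \<Longrightarrow> Cshape (a + 1) n 1 (n - 2) 1 = cblock 1 a n"
  by (auto simp: Cshape_def cblock_def)

lemma Cshape_long_arms_eq:
  assumes "1 \<le> k" "a = m - k" "1 \<le> a" "1 \<le> n"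
  shows "Cshape m n k (n - 2) 1 = rect 1 a 1 n \<union> rect (a + 1) m 1 1 \<union> rect (a + 1) m n n"
  using assms by (auto simp: Cshape_def)

lemma has_ham_path_Cshape_long_arms:
  assumes "2 \<le> k" "a = m - k" "2 \<le> a" "3 \<le> n"
    and "s \<in> Cshape m n k (n - 2) 1" "t \<in> Cshape m n k (n - 2) 1" "s \<noteq> t"
    and "\<not> F3 (Cshape m n k (n - 2) 1) s t"
  shows "has_ham_path (Cshape m n k (n - 2) 1) s t"
proof -
  let ?V = "rect 1 a 1 n \<union> rect (a + 1) m 1 1 \<union> rect (a + 1) m n n"
  have V: "Cshape m n k (n - 2) 1 = ?V" using assms(1-4) by (intro Cshape_long_arms_eq) auto
  have deg: "sg_deg ?V (m, 1) = 1" "sg_deg ?V (m, n) = 1"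
  proof -
    have "{w \<in> ?V. sg_adj (m, 1) w} = {(m - 1, 1)}" "{w \<in> ?V. sg_adj (m, n) w} = {(m - 1, n)}"
      using assms(1-4) by (auto simp: sg_adj_def)
    then show "sg_deg ?V (m, 1) = 1" "sg_deg ?V (m, n) = 1" by (simp_all add: sg_deg_def)
  qed
  have "(m, 1) \<in> ?V" "(m, n) \<in> ?V" using assms(1-4) by auto
  then have "(m, 1) \<in> {s, t}" "(m, n) \<in> {s, t}"
    using assms(8) deg unfolding F3_def V by blast+
  then have st: "{s, t} = {(m, 1), (m, n)}" using assms(4,7) by auto
  have path: "has_ham_path ?V (m, 1) (m, n)"
    by (rule has_ham_path_peel[OF _ has_ham_path_row_left[of "a + 1" m 1]],
        rule has_ham_path_join[OF has_ham_path_rect_from_x1y0[of "(a, n)" 1 a 1 n]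
          has_ham_path_row[of "a + 1" m n]])
      (use assms(1-4) in auto)
  from st show ?thesis
    unfolding V using path has_ham_path_rev[OF path] by (auto simp: doubleton_eq_iff)
qed

theorem lemma9:
  fixes m n k l c d a :: int and s t :: vtx
  assumes "m \<ge> 2" and "n \<ge> 3" and "k \<ge> 1" and "l \<ge> 1" and "c \<ge> 1"
    and "d = n - l - c" and "d \<ge> 1" and "a = m - k" and "a \<ge> 1"
    and "a > 1" and "c = 1" and "d = 1"
    and "s \<in> Cshape m n k l c" and "t \<in> Cshape m n k l c" and "s \<noteq> t"
    and "fst s \<le> fst t"
    and "\<not> F1 (Cshape m n k l c) s t"
    and "\<not> F3 (Cshape m n k l c) s t"
    and "\<not> F7 m n a c d s t"
    and "\<not> F8 m n a k c d s t"
  shows "\<exists>P. hamiltonian_path (Cshape m n k l c) s t P"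
proof -
  have l: "l = n - 2" and c: "c = 1" using assms(6,11,12) by simp_all
  have k_pos: "1 \<le> k" and a2: "2 \<le> a" and n3: "3 \<le> n" using assms(3,10,2) by simp_all
  have "has_ham_path (Cshape m n k (n - 2) 1) s t"
  proof (cases "k = 1")
    case True
    then have m: "m = a + 1" using assms(8) by simp
    have C: "Cshape m n k l c = cblock 1 a n"
      using Cshape_eq_cblock[of a n] m True l c a2 n3 by simp
    have "sg_connected (cblock 1 a n - {s, t})"
      using assms(13,14,17) C unfolding F1_def vertex_cut_def by auto
    moreover have "\<not> F7 (a + 1) n a 1 1 s t" "\<not> F8 (a + 1) n a 1 1 1 s t"
      using assms(11,12,19,20) m True by simp_all
    ultimately show ?thesis
      using has_ham_path_cblock[OF a2 n3 _ _ assms(15,16)] assms(13,14) C l c by simp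
  next
    case False
    then show ?thesis
      using has_ham_path_Cshape_long_arms[of k a m n s t] assms(8,13-15,18) k_pos a2 n3 l c by simp
  qed
  then show ?thesis using l c by (simp add: has_ham_path_def)
qed

end
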